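(* For every finite simple graph $G$ there exists a (not necessarily connected) supergraceful graph $H$ containing a subgraph isomorphic to $G$.
   Context: For a graph $H$ with $p$ nodes and $q$ edges, a total labeling is a map $\varphi: V(H) \to \{1,\dots,p+q\}$ such that the $p$ node labels $\varphi(x)$ and the $q$ edge labels $|\varphi(x)-\varphi(y)|$, $xy \in E(H)$, are all pairwise distinct, together forming exactly $\{1,\dots,p+q\}$; $H$ is supergraceful if it admits a total labeling. *)

theory Defs
  imports Main
begin

definition simple_graph :: "'a set \<Rightarrow> 'a set set \<Rightarrow> bool" where
  "simple_graph V E \<longleftrightarrow> finite V \<and> (\<forall>e\<in>E. e \<subseteq> V \<and> card e = 2)"

text \<open>Label of a node (Inl v) is phi v; label of an edge (Inr {x,y}) is |phi x - phi y|,
  written as Max - Min of the image of the edge.\<close>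
definition total_label :: "('a \<Rightarrow> int) \<Rightarrow> 'a + 'a set \<Rightarrow> int" where
  "total_label \<phi> z = (case z of Inl v \<Rightarrow> \<phi> v | Inr e \<Rightarrow> Max (\<phi> ` e) - Min (\<phi> ` e))"

definition total_labeling :: "'a set \<Rightarrow> 'a set set \<Rightarrow> ('a \<Rightarrow> int) \<Rightarrow> bool" where
  "total_labeling V E \<phi> \<longleftrightarrow>
     bij_betw (total_label \<phi>) (Inl ` V \<union> Inr ` E) {1 .. int (card V + card E)}"

definition supergraceful :: "'a set \<Rightarrow> 'a set set \<Rightarrow> bool" where
  "supergraceful V E \<longleftrightarrow> (\<exists>\<phi>. total_labeling V E \<phi>)"

definition contains_copy :: "'b set \<Rightarrow> 'b set set \<Rightarrow> 'a set \<Rightarrow> 'a set set \<Rightarrow> bool" where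
  "contains_copy VH EH VG EG \<longleftrightarrow>
     (\<exists>f. inj_on f VG \<and> f ` VG \<subseteq> VH \<and> (\<forall>e\<in>EG. f ` e \<in> EH))"

end

theory Submission
  imports Defs
begin

text \<open>Every graph on \<open>n\<close> vertices is a subgraph of the complete graph \<open>K_n\<close>, so it suffices
  to make \<open>K_n\<close> supergraceful by adding isolated vertices. Put the vertices of \<open>K_n\<close> at
  \<open>3^0, ..., 3^(n-1)\<close> and label every node by its own name. An edge \<open>{3^i, 3^j}\<close> with \<open>i < j\<close>
  then gets the label \<open>3^j - 3^i\<close>, which lies strictly between \<open>3^(j-1)\<close> and \<open>3^j\<close>; hence the
  edge labels are pairwise distinct and differ from all node labels. Every number in
  \<open>{1..3^n}\<close> that is not an edge label is then added as an isolated node.\<close>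

definition edge_length :: "nat set \<Rightarrow> nat" where
  "edge_length e = Max e - Min e"

lemma total_label_int_Inr:
  fixes e :: "nat set"
  assumes "finite e" "e \<noteq> {}"
  shows "total_label int (Inr e) = int (edge_length e)"
proof -
  have "Max (int ` e) = int (Max e)" "Min (int ` e) = int (Min e)"
    using mono_Max_commute[of int e] mono_Min_commute[of int e] assms by (simp_all add: mono_def)
  moreover have "Min e \<le> Max e" using assms by simp
  ultimately show ?thesis by (simp add: total_label_def edge_length_def)
qed

lemma total_labeling_int:
  fixes EH :: "nat set set" and M :: nat
  assumes edges: "\<forall>e\<in>EH. finite e \<and> e \<noteq> {}"
    and inj: "inj_on edge_length EH"
    and lengths: "edge_length ` EH \<subseteq> {1..M}"
  shows "total_labeling ({1..M} - edge_length ` EH) EH int"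
proof -
  define VH where "VH = {1..M} - edge_length ` EH"
  have finite_EH: "finite EH"
    using inj lengths finite_imageD finite_subset by blast
  have nodes: "bij_betw (total_label int) (Inl ` VH) (int ` VH)"
    by (auto simp: bij_betw_def inj_on_def total_label_def image_image)
  have "bij_betw (int \<circ> edge_length) EH (int ` edge_length ` EH)"
    using inj by (auto simp: bij_betw_def inj_on_def image_image)
  then have "bij_betw (total_label int \<circ> Inr) EH (int ` edge_length ` EH)"
    by (rule bij_betw_cong[THEN iffD1, rotated]) (simp add: edges total_label_int_Inr)
  then have edge_labels: "bij_betw (total_label int) (Inr ` EH) (int ` edge_length ` EH)"
    by (simp add: bij_betw_def inj_on_def image_image)
  have "bij_betw (total_label int) (Inl ` VH \<union> Inr ` EH) (int ` VH \<union> int ` edge_length ` EH)"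
    by (rule bij_betw_combine[OF nodes edge_labels]) (auto simp: VH_def)
  moreover have "int ` VH \<union> int ` edge_length ` EH = int ` {1..M}"
    using lengths by (auto simp: VH_def)
  moreover have "card VH + card EH = M"
    using card_Diff_subset[of "edge_length ` EH" "{1..M}"] card_image[OF inj]
      card_mono[OF _ lengths] finite_EH lengths by (simp add: VH_def)
  ultimately have "bij_betw (total_label int) (Inl ` VH \<union> Inr ` EH) {1..int (card VH + card EH)}"
    by (simp add: image_int_atLeastAtMost)
  then show ?thesis
    unfolding total_labeling_def VH_def .
qed

lemma power_diff_bounds:
  fixes b :: nat
  assumes "3 \<le> b" "i < j"
  shows "b ^ (j - 1) < b ^ j - b ^ i" "b ^ j - b ^ i < b ^ j"
proof -
  have "b ^ i \<le> b ^ (j - 1)" using assms by (intro power_increasing) auto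
  moreover have "b ^ j = b * b ^ (j - 1)" using assms by (simp flip: power_Suc)
  moreover have "0 < b ^ i" using assms by simp
  ultimately show "b ^ (j - 1) < b ^ j - b ^ i" "b ^ j - b ^ i < b ^ j"
    using assms(1) mult_le_mono1[of 3 b "b ^ (j - 1)"] by linarith+
qed

lemma between_consecutive_powers_unique:
  fixes b x :: nat
  assumes "1 < b" "b ^ (j - 1) < x" "x < b ^ j" "b ^ (k - 1) < x" "x < b ^ k"
  shows "j = k"
proof (rule ccontr)
  have no_gap: False if "b ^ (m - 1) < x" "x < b ^ l" "l < m" for l m
  proof -
    have "b ^ l \<le> b ^ (m - 1)" using assms(1) that(3) by (intro power_increasing) auto
    then show False using that by linarith
  qed
  assume "j \<noteq> k"
  then consider "j < k" | "k < j" by linarith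
  then show False
    by cases (use no_gap assms in blast)+
qed

lemma power_diff_inj:
  fixes b :: nat
  assumes "3 \<le> b" "i < j" "k < l" "b ^ j - b ^ i = b ^ l - b ^ k"
  shows "i = k" "j = l"
proof -
  show "j = l"
    using power_diff_bounds[OF assms(1,2)] power_diff_bounds[OF assms(1,3)] assms(1,4)
    by (intro between_consecutive_powers_unique[of b j "b ^ j - b ^ i" l]) simp_all
  moreover have "b ^ i < b ^ j" "b ^ k < b ^ l"
    using assms by (simp_all add: power_strict_increasing_iff)
  ultimately have "b ^ i = b ^ k" using assms(4) by (metis diff_diff_cancel less_imp_le)
  then show "i = k" using assms(1) by (simp add: power_inject_exp)
qed

lemma power_diff_not_power:
  fixes b :: nat
  assumes "3 \<le> b" "i < j"
  shows "b ^ j - b ^ i \<noteq> b ^ m"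
proof
  assume eq: "b ^ j - b ^ i = b ^ m"
  have "1 < b" using assms by simp
  then have "j - 1 < m" "m < j"
    using power_diff_bounds[OF assms] eq by (simp_all add: power_strict_increasing_iff)
  then show False by linarith
qed

definition power_clique :: "nat \<Rightarrow> nat \<Rightarrow> nat set set" where
  "power_clique b n = {{b ^ i, b ^ j} | i j. i < j \<and> j < n}"

lemma power_clique_edge:
  assumes "1 < b" "e \<in> power_clique b n"
  shows "card e = 2" "e \<subseteq> {b ^ i | i. i < n}"
  using assms by (auto simp: power_clique_def)

lemma edge_length_power_pair:
  fixes b :: nat
  assumes "1 < b" "i < j"
  shows "edge_length {b ^ i, b ^ j} = b ^ j - b ^ i"
proof -
  have "b ^ i < b ^ j" using assms by (simp add: power_strict_increasing_iff)
  then show ?thesis by (simp add: edge_length_def max_def min_def)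
qed

lemma edge_length_power_clique:
  fixes b :: nat
  assumes "1 < b" "e \<in> power_clique b n"
  obtains i j where "i < j" "j < n" "edge_length e = b ^ j - b ^ i"
  using assms edge_length_power_pair[of b] by (auto simp: power_clique_def)

lemma inj_on_edge_length_power_clique:
  fixes b :: nat
  assumes "3 \<le> b"
  shows "inj_on edge_length (power_clique b n)"
proof (rule inj_onI)
  fix e e' assume "e \<in> power_clique b n" "e' \<in> power_clique b n"
    and "edge_length e = edge_length e'"
  moreover have "1 < b" using assms by simp
  ultimately show "e = e'"
    using power_diff_inj[OF assms] edge_length_power_pair[of b]
    by (auto simp: power_clique_def)
qed

lemma edge_lengths_power_clique_bounded:
  fixes b :: nat
  assumes "3 \<le> b"
  shows "edge_length ` power_clique b n \<subseteq> {1..b ^ n}"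
proof
  fix x assume "x \<in> edge_length ` power_clique b n"
  then obtain e where e: "e \<in> power_clique b n" "x = edge_length e" by blast
  have "1 < b" using assms by simp
  then obtain i j where ij: "i < j" "j < n" "x = b ^ j - b ^ i"
    using edge_length_power_clique e by metis
  have "b ^ j \<le> b ^ n" using assms ij by (intro power_increasing) auto
  then show "x \<in> {1..b ^ n}" using power_diff_bounds[OF assms ij(1)] ij by auto
qed

definition power_clique_nodes :: "nat \<Rightarrow> nat \<Rightarrow> nat set" where
  "power_clique_nodes b n = {1..b ^ n} - edge_length ` power_clique b n"

lemma powers_in_power_clique_nodes:
  fixes b :: nat
  assumes "3 \<le> b"
  shows "{b ^ i | i. i < n} \<subseteq> power_clique_nodes b n"
proof safe
  fix i assume "i < n"
  then have "b ^ i \<le> b ^ n" using assms by (intro power_increasing) auto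
  moreover have "b ^ i \<noteq> edge_length e" if e: "e \<in> power_clique b n" for e
  proof -
    have "1 < b" using assms by simp
    then obtain i' j' where "i' < j'" "edge_length e = b ^ j' - b ^ i'"
      using edge_length_power_clique e by metis
    then show ?thesis using power_diff_not_power[OF assms] by metis
  qed
  ultimately show "b ^ i \<in> power_clique_nodes b n"
    using assms by (auto simp: power_clique_nodes_def)
qed

lemma simple_graph_power_clique:
  fixes b :: nat
  assumes "3 \<le> b"
  shows "simple_graph (power_clique_nodes b n) (power_clique b n)"
  unfolding simple_graph_def
proof (intro conjI ballI)
  show "finite (power_clique_nodes b n)"
    by (simp add: power_clique_nodes_def)
  fix e assume "e \<in> power_clique b n"
  then show "e \<subseteq> power_clique_nodes b n" "card e = 2"
    using power_clique_edge[of b e n] powers_in_power_clique_nodes[OF assms] assms by auto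
qed

lemma total_labeling_power_clique:
  fixes b :: nat
  assumes "3 \<le> b"
  shows "total_labeling (power_clique_nodes b n) (power_clique b n) int"
  unfolding power_clique_nodes_def
proof (rule total_labeling_int)
  show "\<forall>e\<in>power_clique b n. finite e \<and> e \<noteq> {}"
    using assms by (auto simp: power_clique_def)
qed (use assms inj_on_edge_length_power_clique edge_lengths_power_clique_bounded in auto)

lemma simple_graph_embeds_in_power_clique:
  fixes b :: nat
  assumes "simple_graph V E" "1 < b"
  obtains f where "inj_on f V" "f ` V \<subseteq> {b ^ i | i. i < card V}"
    "\<forall>e\<in>E. f ` e \<in> power_clique b (card V)"
proof -
  have "finite V" and E: "\<forall>e\<in>E. e \<subseteq> V \<and> card e = 2"
    using assms(1) by (auto simp: simple_graph_def)
  then obtain g where g: "bij_betw g V {0..<card V}"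
    using ex_bij_betw_finite_nat by blast
  define f where "f v = b ^ g v" for v
  have "inj_on f V"
    using g assms(2) by (auto simp: f_def bij_betw_def inj_on_def power_inject_exp)
  moreover have "g v < card V" if "v \<in> V" for v
    using g that by (auto simp: bij_betw_def)
  then have "f ` V \<subseteq> {b ^ i | i. i < card V}"
    by (auto simp: f_def)
  moreover have "f ` e \<in> power_clique b (card V)" if e: "e \<in> E" for e
  proof -
    obtain x y where xy: "e = {x, y}" "x \<noteq> y" "x \<in> V" "y \<in> V"
      using E e by (auto simp: card_2_iff)
    then have "g x \<noteq> g y" "g x < card V" "g y < card V"
      using g by (auto simp: bij_betw_def inj_on_def)
    then consider "g x < g y" "g y < card V" | "g y < g x" "g x < card V"
      by linarith
    then show ?thesis
      by cases (auto simp: power_clique_def f_def xy(1) insert_commute)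
  qed
  ultimately show ?thesis using that by blast
qed

theorem theorem8p7:
  fixes V :: "'a set" and E :: "'a set set"
  assumes "simple_graph V E"
  shows "\<exists>(VH :: nat set) (EH :: nat set set).
           simple_graph VH EH \<and> supergraceful VH EH \<and> contains_copy VH EH V E"
proof -
  obtain f where "inj_on f V" "f ` V \<subseteq> {3 ^ i | i. i < card V}"
    "\<forall>e\<in>E. f ` e \<in> power_clique 3 (card V)"
    using simple_graph_embeds_in_power_clique[OF assms, of 3] by auto
  then have "contains_copy (power_clique_nodes 3 (card V)) (power_clique 3 (card V)) V E"
    using powers_in_power_clique_nodes[of 3 "card V"] unfolding contains_copy_def by blast
  moreover have "supergraceful (power_clique_nodes 3 (card V)) (power_clique 3 (card V))"
    using total_labeling_power_clique[of 3] unfolding supergraceful_def by auto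
  ultimately show ?thesis
    using simple_graph_power_clique[of 3] by blast
qed

end
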